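(* Let $l\ge1$ be an integer. (i) For every measure $m=\gamma_1\epsilon_{\lambda_1}+\cdots+\gamma_{l+1}\epsilon_{\lambda_{l+1}}$ with $\gamma_i>0$ and $0<\lambda_1<\cdots<\lambda_{l+1}$, there is a unique measure $M=c_1\epsilon_{\kappa_1}+\cdots+c_l\epsilon_{\kappa_l}$ with $c_i>0$ and $0<\kappa_1<\cdots<\kappa_l$ satisfying $$q+\frac r\lambda+\int\frac{m(du)}{\lambda+u}=\frac{1}{a\lambda+b+\int\frac{\lambda}{\lambda+u}M(du)},\qquad\lambda>0,\qquad(\ast)$$ with $a=1/\overline m_0$, $b=1/\overline m_{-1}$, $q=0=r$; moreover $\lambda_1<\kappa_1<\lambda_2<\cdots<\kappa_{l-1}<\lambda_l<\kappa_l<\lambda_{l+1}$. Conversely, for given $a,b>0$ and $M=c_1\epsilon_{\kappa_1}+\cdots+c_l\epsilon_{\kappa_l}$ ($c_i>0$, $0<\kappa_1<\cdots<\kappa_l$), there is a unique $m=\gamma_1\epsilon_{\lambda_1}+\cdots+\gamma_{l+1}\epsilon_{\lambda_{l+1}}$ ($\gamma_i>0$, $0<\lambda_1<\cdots<\lambda_{l+1}$) satisfying $(\ast)$ with $q=0=r$. (ii) Let $q>0$. For every $m=\gamma_1\epsilon_{\lambda_1}+\cdots+\gamma_l\epsilon_{\lambda_l}$ with $\gamma_i>0$, $0<\lambda_1<\cdots<\lambda_l$, there is a unique $M=c_1\epsilon_{\kappa_1}+\cdots+c_l\epsilon_{\kappa_l}$ ($c_i>0$, $0<\kappa_1<\cdots<\kappa_l$)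 satisfying $(\ast)$ with $r=0=a$ and $b=1/(q+\overline m_{-1})$; moreover $\lambda_1<\kappa_1<\lambda_2<\cdots<\kappa_{l-1}<\lambda_l<\kappa_l\le\lambda_l+\overline m_0q^{-1}$. Conversely, for given $b>0$ and $M=c_1\epsilon_{\kappa_1}+\cdots+c_l\epsilon_{\kappa_l}$ ($c_i>0$, $0<\kappa_1<\cdots<\kappa_l$), there is a unique $m=\gamma_1\epsilon_{\lambda_1}+\cdots+\gamma_l\epsilon_{\lambda_l}$ ($\gamma_i>0$, $0<\lambda_1<\cdots<\lambda_l$) satisfying $(\ast)$ with $q=1/(b+\overline M_0)$ and $r=0=a$.
   Context: $\epsilon_x$ denotes the Dirac measure at $x$. For a measure $m$ on $(0,\infty)$, $\overline m_\alpha=\int u^\alpha m(du)$. *)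

theory Defs
  imports Complex_Main
begin

text \<open>A finite discrete measure  w 1 \<epsilon>_(x 1) + ... + w n \<epsilon>_(x n)  on (0,\<infinity>) is represented
  by its weights w and atoms x (1-based indices).  disc_ok n w x: all weights positive and
  0 < x 1 < x 2 < ... < x n.\<close>

definition disc_ok :: "nat \<Rightarrow> (nat \<Rightarrow> real) \<Rightarrow> (nat \<Rightarrow> real) \<Rightarrow> bool" where
  "disc_ok n w x \<longleftrightarrow> (\<forall>i\<in>{1..n}. 0 < w i) \<and> 0 < x 1 \<and> (\<forall>i. 1 \<le> i \<and> i < n \<longrightarrow> x i < x (Suc i))"

definition dint :: "nat \<Rightarrow> (nat \<Rightarrow> real) \<Rightarrow> (nat \<Rightarrow> real) \<Rightarrow> (real \<Rightarrow> real) \<Rightarrow> real" where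
  "dint n w x f = (\<Sum>i=1..n. w i * f (x i))"

definition dmom :: "nat \<Rightarrow> (nat \<Rightarrow> real) \<Rightarrow> (nat \<Rightarrow> real) \<Rightarrow> real \<Rightarrow> real" where
  "dmom n w x \<alpha> = dint n w x (\<lambda>u. u powr \<alpha>)"

definition star_rel :: "real \<Rightarrow> real \<Rightarrow> real \<Rightarrow> real \<Rightarrow>
    nat \<Rightarrow> (nat \<Rightarrow> real) \<Rightarrow> (nat \<Rightarrow> real) \<Rightarrow> nat \<Rightarrow> (nat \<Rightarrow> real) \<Rightarrow> (nat \<Rightarrow> real) \<Rightarrow> bool" where
  "star_rel q r a b nm g lam nM c k \<longleftrightarrow>
     (\<forall>t>0. q + r / t + dint nm g lam (\<lambda>u. 1 / (t + u))
            = 1 / (a * t + b + dint nM c k (\<lambda>u. t / (t + u))))"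

end

theory Submission
  imports Defs "HOL-Computational_Algebra.Polynomial"
begin

text \<open>
  Clearing denominators turns \<open>star_rel\<close> into an identity between rational functions whose
  poles are the negatives of the atoms. With \<open>Q(t) = \<Prod>(t + \<lambda>\<^sub>i)\<close> and
  \<open>K(t) = \<Prod>(t + \<kappa>\<^sub>j)\<close> one has \<open>q + \<integral> m(du)/(t+u) = P(t)/Q(t)\<close> and
  \<open>a t + b + \<integral> t/(t+u) M(du) = G(t)/K(t)\<close> for explicit polynomials \<open>P\<close> and \<open>G\<close>, so \<open>star_rel\<close>
  says \<open>P/Q = K/G\<close>. Given \<open>m\<close>, the values \<open>P(-\<lambda>\<^sub>i)\<close> alternate in sign, so \<open>P\<close> has a zero
  \<open>-\<kappa>\<^sub>j\<close> strictly between consecutive \<open>-\<lambda>\<^sub>i\<close> (for \<open>q > 0\<close> the last one lies in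
  \<open>(\<lambda>\<^sub>l, \<lambda>\<^sub>l + m\<^sub>0/q]\<close>), and comparing leading coefficients \<open>P\<close> is a constant multiple of \<open>K\<close>.
  Conversely, given \<open>M\<close>, \<open>G\<close> alternates at \<open>0, -\<kappa>\<^sub>1, \<dots>, -\<kappa>\<^sub>l\<close> and, when \<open>a > 0\<close>, at a far
  point \<open>-T\<close>; its zeros are the \<open>-\<lambda>\<^sub>i\<close> and \<open>G\<close> is a constant multiple of \<open>Q\<close>.
  In both directions the remaining measure is read off from the partial fraction expansion of a
  ratio \<open>\<Prod>(t + y\<^sub>i) / \<Prod>(t + x\<^sub>j)\<close> of products with interlacing zeros, whose residues are
  positive precisely because of the interlacing. Uniqueness holds because
  \<open>t \<mapsto> \<Sum> w\<^sub>i / (t + x\<^sub>i)\<close> on \<open>t > 0\<close> determines the atoms \<open>x\<^sub>i\<close> and weights \<open>w\<^sub>i\<close>.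
\<close>

section \<open>Node polynomials and partial fractions\<close>

text \<open>The zeros are the points \<open>- x i\<close>: an atom \<open>u\<close> is the pole \<open>- u\<close> of \<open>t \<mapsto> 1 / (t + u)\<close>.\<close>

definition node_poly :: "'a set \<Rightarrow> ('a \<Rightarrow> real) \<Rightarrow> real poly" where
  "node_poly I x = (\<Prod>i\<in>I. [:x i, 1:])"

definition partial_numer :: "'a set \<Rightarrow> ('a \<Rightarrow> real) \<Rightarrow> ('a \<Rightarrow> real) \<Rightarrow> real poly" where
  "partial_numer I w x = (\<Sum>i\<in>I. smult (w i) (node_poly (I - {i}) x))"

lemma poly_node_poly: "poly (node_poly I x) t = (\<Prod>i\<in>I. t + x i)"
  by (simp add: node_poly_def poly_prod add.commute)

lemma degree_node_poly: "finite I \<Longrightarrow> degree (node_poly I x) = card I"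
  unfolding node_poly_def by (subst degree_prod_sum_eq) auto

lemma coeff_node_poly_card: "finite I \<Longrightarrow> coeff (node_poly I x) (card I) = 1"
proof -
  assume "finite I"
  have "lead_coeff (node_poly I x) = (\<Prod>i\<in>I. lead_coeff [:x i, 1:])"
    unfolding node_poly_def by (rule lead_coeff_prod)
  then have "lead_coeff (node_poly I x) = 1" by simp
  then show ?thesis using degree_node_poly[OF \<open>finite I\<close>, of x] by simp
qed

lemma node_poly_root: "finite I \<Longrightarrow> j \<in> I \<Longrightarrow> poly (node_poly I x) (- x j) = 0"
  unfolding poly_node_poly by (intro prod_zero) auto

lemma poly_node_poly_pos: "(\<And>i. i \<in> I \<Longrightarrow> 0 < t + x i) \<Longrightarrow> 0 < poly (node_poly I x) t"
  unfolding poly_node_poly by (rule prod_pos) auto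

lemma poly_eq_smult_node_poly:
  fixes P :: "real poly" and x :: "nat \<Rightarrow> real"
  assumes "degree P \<le> m" "coeff P m = s" and x: "strict_mono_on {1..m} x"
    and zeros: "\<And>i. i \<in> {1..m} \<Longrightarrow> poly P (- x i) = 0"
  shows "P = smult s (node_poly {1..m} x)"
proof (rule poly_eqI_degree_lead_coeff[where n = m and A = "(\<lambda>i. - x i) ` {1..m}"])
  have "inj_on (\<lambda>i. - x i) {1..m}"
    by (intro inj_onI) (auto dest: inj_onD[OF strict_mono_on_imp_inj_on[OF x]])
  then show "m \<le> card ((\<lambda>i. - x i) ` {1..m})" by (simp add: card_image)
  show "poly P z = poly (smult s (node_poly {1..m} x)) z" if "z \<in> (\<lambda>i. - x i) ` {1..m}" for z
    using that zeros by (auto simp: node_poly_root)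
qed (use assms coeff_node_poly_card[of "{1..m}" x] in \<open>auto simp: degree_node_poly\<close>)

lemma poly_partial_numer:
  assumes "finite I" "\<And>i. i \<in> I \<Longrightarrow> t + x i \<noteq> 0"
  shows "poly (partial_numer I w x) t = poly (node_poly I x) t * (\<Sum>i\<in>I. w i / (t + x i))"
proof -
  have "w i * (\<Prod>j\<in>I-{i}. t + x j) = (\<Prod>j\<in>I. t + x j) * (w i / (t + x i))" if "i \<in> I" for i
    using assms that by (simp add: prod.remove field_simps)
  then show ?thesis
    by (simp add: partial_numer_def poly_sum poly_node_poly sum_distrib_left)
qed

lemma poly_partial_numer_node:
  assumes "finite I" "k \<in> I"
  shows "poly (partial_numer I w x) (- x k) = w k * (\<Prod>i\<in>I-{k}. x i - x k)"
proof -
  have "poly (partial_numer I w x) (- x k) =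
      poly (smult (w k) (node_poly (I - {k}) x)) (- x k) +
      (\<Sum>i\<in>I-{k}. poly (smult (w i) (node_poly (I - {i}) x)) (- x k))"
    using assms by (simp add: partial_numer_def poly_sum sum.remove)
  also have "(\<Sum>i\<in>I-{k}. poly (smult (w i) (node_poly (I - {i}) x)) (- x k)) = 0"
    using assms by (intro sum.neutral) (auto simp: node_poly_root)
  finally show ?thesis by (simp add: poly_node_poly)
qed

lemma degree_partial_numer: "finite I \<Longrightarrow> degree (partial_numer I w x) \<le> card I - 1"
  unfolding partial_numer_def by (intro degree_sum_le) (auto simp: degree_node_poly)

lemma coeff_partial_numer:
  "finite I \<Longrightarrow> coeff (partial_numer I w x) (card I - 1) = sum w I"
  unfolding partial_numer_def coeff_sum
proof (intro sum.cong refl)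
  fix i assume "finite I" "i \<in> I"
  then show "coeff (smult (w i) (node_poly (I - {i}) x)) (card I - 1) = w i"
    using coeff_node_poly_card[of "I - {i}" x] by simp
qed

lemma partial_fractions:
  fixes N :: "real poly"
  assumes I: "finite I" "inj_on x I" and deg: "degree N < card I"
    and t: "\<And>i. i \<in> I \<Longrightarrow> t + x i \<noteq> 0"
  shows "poly N t / poly (node_poly I x) t =
    (\<Sum>j\<in>I. poly N (- x j) / (\<Prod>i\<in>I-{j}. x i - x j) / (t + x j))"
proof -
  define w where "w j = poly N (- x j) / (\<Prod>i\<in>I-{j}. x i - x j)" for j
  have gaps: "(\<Prod>i\<in>I-{j}. x i - x j) \<noteq> 0" if "j \<in> I" for j
    using I that by (auto simp: inj_on_def)
  have "card ((\<lambda>i. - x i) ` I) = card I"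
    using I by (intro card_image) (auto simp: inj_on_def)
  then have "N = partial_numer I w x"
    using deg degree_partial_numer[OF I(1), of w x] gaps
    by (intro poly_eqI_degree[of "(\<lambda>i. - x i) ` I"])
       (auto simp: poly_partial_numer_node[OF I(1)] w_def)
  moreover have "poly (node_poly I x) t \<noteq> 0"
    using I(1) t by (simp add: poly_node_poly)
  ultimately show ?thesis
    using poly_partial_numer[OF I(1) t] by (simp add: w_def)
qed

lemma node_poly_ratio_partial_fractions:
  assumes I: "finite I" "I \<noteq> {}" "inj_on x I" and J: "finite J" "card J \<le> card I"
    and t: "\<And>i. i \<in> I \<Longrightarrow> t + x i \<noteq> 0"
  shows "poly (node_poly J y) t / poly (node_poly I x) t =
    (if card J = card I then 1 else 0) +
    (\<Sum>j\<in>I. poly (node_poly J y) (- x j) / (\<Prod>i\<in>I-{j}. x i - x j) / (t + x j))"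
proof -
  define N where "N = node_poly J y - (if card J = card I then node_poly I x else 0)"
  have "degree N < card I"
  proof (rule degree_lessI)
    show "N \<noteq> 0 \<or> 0 < card I" using I by (simp add: card_gt_0_iff)
    have "coeff (node_poly J y) i = (if card J = card I \<and> i = card I then 1 else 0)"
      and "coeff (node_poly I x) i = (if i = card I then 1 else 0)" if "card I \<le> i" for i
      using that I J coeff_node_poly_card[of J y] coeff_node_poly_card[of I x]
      by (auto simp: coeff_eq_0 degree_node_poly)
    then show "\<forall>i\<ge>card I. coeff N i = 0" by (simp add: N_def)
  qed
  moreover have "poly N (- x j) = poly (node_poly J y) (- x j)" if "j \<in> I" for j
    using I(1) that by (simp add: N_def node_poly_root)
  ultimately have "poly N t / poly (node_poly I x) t =
      (\<Sum>j\<in>I. poly (node_poly J y) (- x j) / (\<Prod>i\<in>I-{j}. x i - x j) / (t + x j))"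
    using partial_fractions[OF I(1,3) _ t, of N] by simp
  moreover have "poly (node_poly I x) t \<noteq> 0"
    using I(1) t by (simp add: poly_node_poly)
  ultimately show ?thesis by (cases "card J = card I") (auto simp: N_def diff_divide_distrib)
qed

section \<open>Signs at interlacing points\<close>

lemma prod_sign_by_negatives:
  fixes h :: "'a \<Rightarrow> real"
  assumes "finite I" "\<And>i. i \<in> I \<Longrightarrow> h i \<noteq> 0"
  shows "0 < (-1) ^ card {i\<in>I. h i < 0} * prod h I"
  using assms
proof (induction I rule: finite_induct)
  case (insert a F)
  then have IH: "0 < (-1) ^ card {i\<in>F. h i < 0} * prod h F" and "h a \<noteq> 0" by simp_all
  show ?case
  proof (cases "h a < 0")
    case True
    then have "{i\<in>insert a F. h i < 0} = insert a {i\<in>F. h i < 0}" by auto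
    with True IH insert.hyps show ?thesis by (simp add: mult.left_commute[of _ "h a"] mult_neg_pos)
  next
    case False
    then have "{i\<in>insert a F. h i < 0} = {i\<in>F. h i < 0}" by auto
    with False \<open>h a \<noteq> 0\<close> IH insert.hyps show ?thesis by (simp add: mult.left_commute[of _ "h a"])
  qed
qed simp

lemma strict_mono_on_atLeastAtMostI:
  fixes x :: "nat \<Rightarrow> 'a::order"
  assumes "\<And>i. a \<le> i \<Longrightarrow> i < b \<Longrightarrow> x i < x (Suc i)"
  shows "strict_mono_on {a..b} x"
proof (rule strict_mono_onI)
  fix r s assume "r \<in> {a..b}" "s \<in> {a..b}" "r < s"
  then show "x r < x s"
  proof (induction s)
    case (Suc s)
    then show ?case using assms[of s] by (cases "r = s") (auto intro: less_trans)
  qed simp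
qed

lemma sign_prod_node_gaps:
  fixes x :: "nat \<Rightarrow> real"
  assumes x: "strict_mono_on {a..b} x" and j: "j \<in> {a..b}"
  shows "0 < (-1) ^ (j - a) * (\<Prod>i\<in>{a..b}-{j}. x i - x j)"
proof -
  have "x i < x j \<longleftrightarrow> i < j" "x i \<noteq> x j" if "i \<in> {a..b}-{j}" for i
    using that j strict_mono_on_less[OF x] strict_mono_on_eqD[OF x] by auto
  then have "{i\<in>{a..b}-{j}. x i - x j < 0} = {a..<j}" and "\<And>i. i \<in> {a..b}-{j} \<Longrightarrow> x i - x j \<noteq> 0"
    using j by auto
  then show ?thesis using prod_sign_by_negatives[of "{a..b}-{j}" "\<lambda>i. x i - x j"] by simp
qed

lemma sign_prod_interlaced:
  fixes y :: "nat \<Rightarrow> real"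
  assumes y: "strict_mono_on {1..m} y" and "j \<le> m"
    and below: "0 < j \<Longrightarrow> y j < z" and above: "j < m \<Longrightarrow> z < y (Suc j)"
  shows "0 < (-1) ^ j * (\<Prod>i=1..m. y i - z)"
proof -
  have "y i < z" if "i \<in> {1..j}" for i
    using that below strict_mono_on_leD[OF y, of i j] \<open>j \<le> m\<close> by force
  moreover have "z < y i" if "i \<in> {1..m}" "j < i" for i
    using that above strict_mono_on_leD[OF y, of "Suc j" i] by force
  ultimately have "{i\<in>{1..m}. y i - z < 0} = {1..j}" and "\<And>i. i \<in> {1..m} \<Longrightarrow> y i - z \<noteq> 0"
    using \<open>j \<le> m\<close> by (force simp: not_less)+
  then show ?thesis using prod_sign_by_negatives[of "{1..m}" "\<lambda>i. y i - z"] by simp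
qed

text \<open>Both products have the sign \<open>(-1) ^ (j - a)\<close>: exactly \<open>j - a\<close> of the \<open>y\<close> and of the
  \<open>x\<close> lie below \<open>x j\<close>.\<close>

lemma interlacing_weight_pos:
  fixes x y :: "nat \<Rightarrow> real"
  assumes x: "strict_mono_on {a..b} x" and y: "strict_mono_on {1..m} y"
    and j: "j \<in> {a..b}" "j - a \<le> m"
    and below: "a < j \<Longrightarrow> y (j - a) < x j" and above: "j - a < m \<Longrightarrow> x j < y (Suc (j - a))"
  shows "0 < (\<Prod>i=1..m. y i - x j) / (\<Prod>i\<in>{a..b}-{j}. x i - x j)"
proof -
  have "0 < (-1) ^ (j - a) * (\<Prod>i=1..m. y i - x j)"
    using below above j by (intro sign_prod_interlaced[OF y]) auto
  moreover have "0 < (-1) ^ (j - a) * (\<Prod>i\<in>{a..b}-{j}. x i - x j)"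
    by (rule sign_prod_node_gaps[OF x j(1)])
  ultimately show ?thesis
    by (auto simp: minus_one_power_iff zero_less_divide_iff zero_less_mult_iff split: if_splits)
qed

lemma interlacing_partial_fractions:
  fixes x y :: "nat \<Rightarrow> real"
  assumes x: "strict_mono_on {a..b} x" "a \<le> b" and y: "strict_mono_on {1..m} y"
    and deg: "b - a \<le> m" "m \<le> Suc b - a"
    and brk: "\<And>j. j \<in> {a..b} \<Longrightarrow> (a < j \<longrightarrow> y (j - a) < x j) \<and> (j - a < m \<longrightarrow> x j < y (Suc (j - a)))"
  defines "e \<equiv> \<lambda>j. (\<Prod>i=1..m. y i - x j) / (\<Prod>i\<in>{a..b}-{j}. x i - x j)"
  shows interlacing_weights_pos: "\<And>j. j \<in> {a..b} \<Longrightarrow> 0 < e j"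
    and interlacing_ratio_expansion: "\<And>t. (\<And>j. j \<in> {a..b} \<Longrightarrow> t + x j \<noteq> 0) \<Longrightarrow>
      poly (node_poly {1..m} y) t / poly (node_poly {a..b} x) t =
      (if m = Suc b - a then 1 else 0) + (\<Sum>j=a..b. e j / (t + x j))"
proof -
  show "0 < e j" if "j \<in> {a..b}" for j
    unfolding e_def using brk[OF that] that deg by (intro interlacing_weight_pos[OF x(1) y]) auto
  show "poly (node_poly {1..m} y) t / poly (node_poly {a..b} x) t =
      (if m = Suc b - a then 1 else 0) + (\<Sum>j=a..b. e j / (t + x j))"
    if "\<And>j. j \<in> {a..b} \<Longrightarrow> t + x j \<noteq> 0" for t
    using node_poly_ratio_partial_fractions[of "{a..b}" x "{1..m}" t y] that x deg
    by (simp add: strict_mono_on_imp_inj_on e_def poly_node_poly)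
qed

lemma alternating_signs_product_nonpos:
  fixes p q :: real
  assumes "0 < (-1) ^ k * p" "0 \<le> (-1) ^ Suc k * q"
  shows "p * q \<le> 0"
  using assms by (cases "even k") (auto simp: zero_less_mult_iff mult_le_0_iff)

lemma poly_root_between:
  fixes P :: "real poly"
  assumes "u < v" "poly P (- u) \<noteq> 0" "poly P (- u) * poly P (- v) \<le> 0"
  obtains z where "u < z" "z \<le> v" "poly P (- z) = 0"
proof -
  have cont: "\<And>s. isCont (\<lambda>s. poly P (- s)) s" by (intro continuous_intros)
  have "\<exists>z\<ge>u. z \<le> v \<and> poly P (- z) = 0"
  proof (cases "poly P (- u) < 0")
    case True
    with assms have "0 \<le> poly P (- v)" by (simp add: mult_le_0_iff)
    with True assms(1) show ?thesis
      using IVT[of "\<lambda>s. poly P (- s)" u 0 v] cont by auto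
  next
    case False
    with assms have "poly P (- v) \<le> 0" by (simp add: mult_le_0_iff)
    with False assms(1) show ?thesis
      using IVT2[of "\<lambda>s. poly P (- s)" v 0 u] cont by auto
  qed
  then show ?thesis using assms(2) that by (metis le_less)
qed

lemma alternating_poly_roots:
  fixes P :: "real poly" and x :: "nat \<Rightarrow> real"
  assumes x: "strict_mono_on {a..b} x"
    and sgn: "\<And>j. j \<in> {a..b} \<Longrightarrow> 0 < (-1) ^ (j - a) * poly P (- x j)"
  obtains z where "\<And>j. j \<in> {a..<b} \<Longrightarrow> x j < z j \<and> z j < x (Suc j) \<and> poly P (- z j) = 0"
proof -
  have "\<exists>z. x j < z \<and> z < x (Suc j) \<and> poly P (- z) = 0" if j: "j \<in> {a..<b}" for j
  proof -
    have sgn_next: "0 < (-1) ^ Suc (j - a) * poly P (- x (Suc j))"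
      using sgn[of "Suc j"] j by (simp add: Suc_diff_le)
    have "x j < x (Suc j)" using j by (intro strict_mono_onD[OF x]) auto
    moreover have "poly P (- x j) \<noteq> 0" using sgn[of j] j by auto
    moreover have "poly P (- x j) * poly P (- x (Suc j)) \<le> 0"
      using sgn[of j] sgn_next j by (intro alternating_signs_product_nonpos) auto
    ultimately obtain z where z: "x j < z" "z \<le> x (Suc j)" "poly P (- z) = 0"
      by (rule poly_root_between)
    moreover have "z \<noteq> x (Suc j)"
      using z(3) sgn_next by auto
    ultimately show ?thesis by auto
  qed
  then have "\<forall>j\<in>{a..<b}. \<exists>z. x j < z \<and> z < x (Suc j) \<and> poly P (- z) = 0" by blast
  then obtain z where "\<forall>j\<in>{a..<b}. x j < z j \<and> z j < x (Suc j) \<and> poly P (- z j) = 0"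
    by (metis bchoice)
  then show ?thesis using that by blast
qed

section \<open>Discrete measures and uniqueness of their Stieltjes transforms\<close>

lemma disc_ok_strict_mono: "disc_ok n w x \<Longrightarrow> strict_mono_on {1..n} x"
  by (intro strict_mono_on_atLeastAtMostI) (simp add: disc_ok_def)

lemma disc_ok_atom_pos: "disc_ok n w x \<Longrightarrow> i \<in> {1..n} \<Longrightarrow> 0 < x i"
  using strict_mono_on_leD[OF disc_ok_strict_mono, of n w x 1 i] by (auto simp: disc_ok_def)

lemma disc_ok_weight_pos: "disc_ok n w x \<Longrightarrow> i \<in> {1..n} \<Longrightarrow> 0 < w i"
  by (simp add: disc_ok_def)

lemma disc_okI:
  assumes "\<And>i. i \<in> {1..n} \<Longrightarrow> 0 < w i" "0 < x 1" "strict_mono_on {1..n} x"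
  shows "disc_ok n w x"
  unfolding disc_ok_def using assms by (auto intro: strict_mono_onD[OF assms(3)])

lemma dmom_0: "disc_ok n w x \<Longrightarrow> dmom n w x 0 = sum w {1..n}"
  unfolding dmom_def dint_def by (intro sum.cong) (auto dest: disc_ok_atom_pos)

lemma dmom_minus_1: "disc_ok n w x \<Longrightarrow> dmom n w x (-1) = (\<Sum>i=1..n. w i / x i)"
  unfolding dmom_def dint_def by (intro sum.cong) (auto dest: disc_ok_atom_pos simp: powr_neg_one)

lemma stieltjes_sum_eq_0_imp_coeffs_0:
  fixes h :: "real \<Rightarrow> real"
  assumes S: "finite S" "\<And>u. u \<in> S \<Longrightarrow> 0 < u"
    and zero: "\<And>t. 0 < t \<Longrightarrow> (\<Sum>u\<in>S. h u / (t + u)) = 0"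
    and u: "u \<in> S"
  shows "h u = 0"
proof -
  have "poly (partial_numer S h (\<lambda>v. v)) t = 0" if "0 < t" for t
  proof -
    have "t + v \<noteq> 0" if "v \<in> S" for v using S(2)[OF that] \<open>0 < t\<close> by linarith
    then show ?thesis using poly_partial_numer[OF S(1)] zero[OF that] by simp
  qed
  then have "{0<..} \<subseteq> {t. poly (partial_numer S h (\<lambda>v. v)) t = 0}" by auto
  then have "partial_numer S h (\<lambda>v. v) = 0"
    using poly_roots_finite infinite_Ioi finite_subset by blast
  then show ?thesis
    using poly_partial_numer_node[OF S(1) u, of h "\<lambda>v. v"] S(1) by simp
qed

lemma strict_mono_on_image_eq:
  fixes x y :: "nat \<Rightarrow> 'a::linorder"
  assumes x: "strict_mono_on {1..n} x" and y: "strict_mono_on {1..n} y"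
    and img: "x ` {1..n} = y ` {1..n}" and i: "i \<in> {1..n}"
  shows "x i = y i"
proof -
  have sorted: "sorted_wrt (<) (map f [1..<Suc n])" if "strict_mono_on {1..n} f" for f :: "nat \<Rightarrow> 'a"
    unfolding sorted_wrt_iff_nth_less using that by (auto simp del: upt_Suc intro: strict_mono_onD)
  have "map y [1..<Suc n] = map x [1..<Suc n]"
    using img by (intro strict_sorted_equal sorted x y)
      (simp del: upt_Suc add: atLeastLessThanSuc_atLeastAtMost)
  then have "\<forall>j\<in>{1..<Suc n}. y j = x j" by (simp del: upt_Suc add: map_eq_conv)
  with i show ?thesis by auto
qed

definition atom_mass :: "nat \<Rightarrow> (nat \<Rightarrow> real) \<Rightarrow> (nat \<Rightarrow> real) \<Rightarrow> real \<Rightarrow> real" where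
  "atom_mass n w x u = sum w {i\<in>{1..n}. x i = u}"

lemma atom_mass_atom:
  assumes "disc_ok n w x" "k \<in> {1..n}"
  shows "atom_mass n w x (x k) = w k"
proof -
  have "{i\<in>{1..n}. x i = x k} = {k}"
    using strict_mono_on_eqD[OF disc_ok_strict_mono[OF assms(1)]] assms(2) by blast
  then show ?thesis by (simp add: atom_mass_def)
qed

lemma atom_mass_eq_0_iff:
  assumes "disc_ok n w x"
  shows "atom_mass n w x u = 0 \<longleftrightarrow> u \<notin> x ` {1..n}"
proof
  assume "atom_mass n w x u = 0"
  then show "u \<notin> x ` {1..n}"
    using atom_mass_atom[OF assms] disc_ok_weight_pos[OF assms] by force
next
  assume "u \<notin> x ` {1..n}"
  then have "{i\<in>{1..n}. x i = u} = {}" by auto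
  then show "atom_mass n w x u = 0" unfolding atom_mass_def by (metis sum.empty)
qed

lemma stieltjes_sum_by_atom_mass:
  assumes "finite S" "x ` {1..n} \<subseteq> S"
  shows "(\<Sum>i=1..n. w i / (t + x i)) = (\<Sum>u\<in>S. atom_mass n w x u / (t + u))"
  using sum.group[OF _ assms, of "\<lambda>i. w i / (t + x i)"]
  by (simp add: atom_mass_def sum_divide_distrib)

lemma disc_stieltjes_unique:
  assumes d: "disc_ok n w x" and d': "disc_ok n w' x'"
    and eq: "\<And>t. 0 < t \<Longrightarrow> (\<Sum>i=1..n. w i / (t + x i)) = (\<Sum>i=1..n. w' i / (t + x' i))"
    and i: "i \<in> {1..n}"
  shows "w' i = w i \<and> x' i = x i"
proof -
  define S where "S = x ` {1..n} \<union> x' ` {1..n}"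
  have S: "finite S" "\<And>u. u \<in> S \<Longrightarrow> 0 < u"
    using disc_ok_atom_pos[OF d] disc_ok_atom_pos[OF d'] by (auto simp: S_def)
  have zero: "(\<Sum>u\<in>S. (atom_mass n w x u - atom_mass n w' x' u) / (t + u)) = 0" if "0 < t" for t
    using eq[OF that] stieltjes_sum_by_atom_mass[OF S(1), of x n w t]
      stieltjes_sum_by_atom_mass[OF S(1), of x' n w' t]
    by (simp add: S_def diff_divide_distrib sum_subtractf)
  have mass: "atom_mass n w x u = atom_mass n w' x' u" for u
  proof (cases "u \<in> S")
    case True
    then show ?thesis using stieltjes_sum_eq_0_imp_coeffs_0[OF S zero True] by simp
  next
    case False
    then have "u \<notin> x ` {1..n}" "u \<notin> x' ` {1..n}" by (auto simp: S_def)
    then show ?thesis using atom_mass_eq_0_iff[OF d, of u] atom_mass_eq_0_iff[OF d', of u] by simp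
  qed
  have "u \<in> x ` {1..n} \<longleftrightarrow> u \<in> x' ` {1..n}" for u
    using mass[of u] atom_mass_eq_0_iff[OF d, of u] atom_mass_eq_0_iff[OF d', of u] by simp
  then have "x ` {1..n} = x' ` {1..n}" by blast
  then have "x' i = x i"
    using strict_mono_on_image_eq[OF disc_ok_strict_mono[OF d'] disc_ok_strict_mono[OF d] _ i] by simp
  moreover have "w' i = w i"
    using mass[of "x i"] atom_mass_atom[OF d i] atom_mass_atom[OF d' i] calculation by simp
  ultimately show ?thesis by simp
qed

lemma star_rel_unique_cbf:
  assumes "disc_ok l c k" "disc_ok l c' k'"
    and "star_rel q r a b n g lam l c k" "star_rel q r a b n g lam l c' k'" "i \<in> {1..l}"
  shows "c' i = c i \<and> k' i = k i"
proof (rule disc_stieltjes_unique[OF assms(1,2) _ assms(5)])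
  fix t :: real assume t: "0 < t"
  have "1 / (a * t + b + dint l c k (\<lambda>u. t / (t + u))) = 1 / (a * t + b + dint l c' k' (\<lambda>u. t / (t + u)))"
    using assms(3,4) t unfolding star_rel_def by metis
  then have "dint l c k (\<lambda>u. t / (t + u)) = dint l c' k' (\<lambda>u. t / (t + u))" by simp
  moreover have "dint l w x (\<lambda>u. t / (t + u)) = t * (\<Sum>i=1..l. w i / (t + x i))" for w x
    unfolding dint_def sum_distrib_left by (intro sum.cong) auto
  ultimately show "(\<Sum>i=1..l. c i / (t + k i)) = (\<Sum>i=1..l. c' i / (t + k' i))"
    using t by simp
qed

lemma star_rel_unique_stieltjes:
  assumes "disc_ok n g lam" "disc_ok n g' lam'"
    and "star_rel q r a b n g lam l c k" "star_rel q r a b n g' lam' l c k" "i \<in> {1..n}"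
  shows "g' i = g i \<and> lam' i = lam i"
proof (rule disc_stieltjes_unique[OF assms(1,2) _ assms(5)])
  fix t :: real assume t: "0 < t"
  have "q + r / t + dint n g lam (\<lambda>u. 1 / (t + u)) = q + r / t + dint n g' lam' (\<lambda>u. 1 / (t + u))"
    using assms(3,4) t unfolding star_rel_def by metis
  then show "(\<Sum>i=1..n. g i / (t + lam i)) = (\<Sum>i=1..n. g' i / (t + lam' i))"
    by (simp add: dint_def)
qed

section \<open>From the Stieltjes side to the complete Bernstein side\<close>

text \<open>Since \<open>t / (t + 0) = 1\<close>, the constant \<open>b\<close> in \<open>star_rel\<close> is the weight at \<open>0\<close> of \<open>M + b \<epsilon>\<^sub>0\<close>;
  \<open>with_zero_atom k\<close> lists the atoms of that measure.\<close>

definition with_zero_atom :: "(nat \<Rightarrow> real) \<Rightarrow> nat \<Rightarrow> real" where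
  "with_zero_atom k j = (if j = 0 then 0 else k j)"

lemma strict_mono_with_zero_atom:
  assumes "strict_mono_on {1..l} k" "0 < k 1"
  shows "strict_mono_on {0..l} (with_zero_atom k)"
  using assms by (intro strict_mono_on_atLeastAtMostI) (auto simp: with_zero_atom_def strict_mono_onD)

lemma node_poly_with_zero_atom:
  "poly (node_poly {0..l} (with_zero_atom k)) t = t * poly (node_poly {1..l} k) t"
proof -
  have "{0..l} = insert 0 {1..l}" by auto
  moreover have "(\<Prod>i=1..l. t + with_zero_atom k i) = (\<Prod>i=1..l. t + k i)"
    by (intro prod.cong) (auto simp: with_zero_atom_def)
  ultimately show ?thesis by (simp add: poly_node_poly with_zero_atom_def)
qed

lemma interlaced_ratio_expansion_with_zero_atom:
  fixes lam k :: "nat \<Rightarrow> real"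
  assumes lam: "strict_mono_on {1..n} lam" "0 < lam 1" and k: "strict_mono_on {1..l} k"
    and n: "n = l \<or> n = Suc l"
    and brk: "\<And>j. j \<in> {1..l} \<Longrightarrow> lam j < k j \<and> (j < n \<longrightarrow> k j < lam (Suc j))"
  obtains e where "\<And>j. j \<in> {0..l} \<Longrightarrow> 0 < e j"
    and "e 0 = poly (node_poly {1..n} lam) 0 / poly (node_poly {1..l} k) 0"
    and "\<And>t. 0 < t \<Longrightarrow> poly (node_poly {1..n} lam) t / poly (node_poly {1..l} k) t =
      (if n = Suc l then t else 0) + e 0 + (\<Sum>j=1..l. e j * (t / (t + k j)))"
proof -
  define k0 where "k0 = with_zero_atom k"
  have k1: "0 < k 1" if "1 \<le> l" using brk[of 1] lam(2) that by auto
  have k0: "strict_mono_on {0..l} k0"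
  proof (cases "l = 0")
    case False
    then show ?thesis unfolding k0_def using k k1 by (auto intro: strict_mono_with_zero_atom)
  qed (auto simp: strict_mono_on_def)
  have k0_nonneg: "0 \<le> k0 j" if "j \<in> {0..l}" for j
    using strict_mono_on_leD[OF k0, of 0 j] that by (simp add: k0_def with_zero_atom_def)
  have brk0: "(0 < j \<longrightarrow> lam (j - 0) < k0 j) \<and> (j - 0 < n \<longrightarrow> k0 j < lam (Suc (j - 0)))"
    if "j \<in> {0..l}" for j
    using brk[of j] lam(2) that by (auto simp: k0_def with_zero_atom_def)
  define e where "e j = (\<Prod>i=1..n. lam i - k0 j) / (\<Prod>i\<in>{0..l}-{j}. k0 i - k0 j)" for j
  show thesis
  proof (rule that)
    show "0 < e j" if "j \<in> {0..l}" for j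
      unfolding e_def using interlacing_weights_pos[OF k0 _ lam(1), of j] brk0 n that by auto
    have "{0..l} - {0} = {1..l}" "k0 0 = 0" by (auto simp: k0_def with_zero_atom_def)
    moreover have "(\<Prod>i=1..l. k0 i - k0 0) = (\<Prod>i=1..l. k i)"
      by (intro prod.cong) (auto simp: k0_def with_zero_atom_def)
    ultimately show "e 0 = poly (node_poly {1..n} lam) 0 / poly (node_poly {1..l} k) 0"
      by (simp add: e_def poly_node_poly)
    show "poly (node_poly {1..n} lam) t / poly (node_poly {1..l} k) t =
      (if n = Suc l then t else 0) + e 0 + (\<Sum>j=1..l. e j * (t / (t + k j)))" if t: "0 < t" for t
    proof -
      define K where "K = poly (node_poly {1..l} k) t"
      have K: "0 < K"
        unfolding K_def using k0_nonneg t by (intro poly_node_poly_pos) (force simp: k0_def with_zero_atom_def)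
      have "poly (node_poly {1..n} lam) t / (t * K) = (if n = Suc l then 1 else 0) + (\<Sum>j=0..l. e j / (t + k0 j))"
        unfolding e_def K_def node_poly_with_zero_atom[symmetric] k0_def[symmetric]
        using interlacing_ratio_expansion[OF k0 _ lam(1), of t] brk0 n t k0_nonneg
        by (force simp: add_pos_nonneg)
      also have "(\<Sum>j=0..l. e j / (t + k0 j)) = e 0 / t + (\<Sum>j=1..l. e j / (t + k j))"
        by (simp add: sum.atLeast_Suc_atMost k0_def with_zero_atom_def)
      finally have "poly (node_poly {1..n} lam) t / K =
          t * ((if n = Suc l then 1 else 0) + (e 0 / t + (\<Sum>j=1..l. e j / (t + k j))))"
        using t K by (simp add: field_simps)
      then show ?thesis
        using t by (simp add: K_def distrib_left sum_distrib_left mult.commute)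
    qed
  qed
qed

text \<open>The left-hand side of \<open>star_rel\<close> (with \<open>r = 0\<close>) times \<open>node_poly {1..n} lam\<close>.\<close>

definition stieltjes_poly :: "real \<Rightarrow> nat \<Rightarrow> (nat \<Rightarrow> real) \<Rightarrow> (nat \<Rightarrow> real) \<Rightarrow> real poly" where
  "stieltjes_poly q n g lam = smult q (node_poly {1..n} lam) + partial_numer {1..n} g lam"

lemma poly_stieltjes_poly:
  assumes "\<And>i. i \<in> {1..n} \<Longrightarrow> t + lam i \<noteq> 0"
  shows "poly (stieltjes_poly q n g lam) t =
    poly (node_poly {1..n} lam) t * (q + (\<Sum>i=1..n. g i / (t + lam i)))"
  using poly_partial_numer[of "{1..n}" t lam g] assms
  by (simp add: stieltjes_poly_def algebra_simps)

lemma stieltjes_poly_sign_at_atoms: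
  assumes g: "disc_ok n g lam" and j: "j \<in> {1..n}"
  shows "0 < (-1) ^ (j - 1) * poly (stieltjes_poly q n g lam) (- lam j)"
proof -
  have "poly (stieltjes_poly q n g lam) (- lam j) = g j * (\<Prod>i\<in>{1..n}-{j}. lam i - lam j)"
    using j by (simp add: stieltjes_poly_def node_poly_root poly_partial_numer_node)
  then show ?thesis
    using sign_prod_node_gaps[OF disc_ok_strict_mono[OF g] j] disc_ok_weight_pos[OF g j]
    by (simp add: mult.left_commute[of _ "g j"])
qed

lemma stieltjes_poly_degree_coeff:
  assumes l: "1 \<le> l" and n: "n = Suc l \<and> q = 0 \<or> n = l"
  shows "degree (stieltjes_poly q n g lam) \<le> l"
    and "coeff (stieltjes_poly q n g lam) l = q + (if n = Suc l then sum g {1..n} else 0)"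
proof -
  have numer: "degree (partial_numer {1..n} g lam) \<le> n - 1"
    "coeff (partial_numer {1..n} g lam) (n - 1) = sum g {1..n}"
    using degree_partial_numer[of "{1..n}" g lam] coeff_partial_numer[of "{1..n}" g lam] by simp_all
  have "degree (stieltjes_poly q n g lam) \<le> l \<and>
      coeff (stieltjes_poly q n g lam) l = q + (if n = Suc l then sum g {1..n} else 0)"
    using n
  proof
    assume "n = Suc l \<and> q = 0"
    then show ?thesis using numer by (simp add: stieltjes_poly_def)
  next
    assume "n = l"
    moreover have "coeff (partial_numer {1..n} g lam) l = 0"
      using numer(1) \<open>n = l\<close> l by (intro coeff_eq_0) linarith
    ultimately show ?thesis
      using numer(1) coeff_node_poly_card[of "{1..n}" lam]
      by (simp add: stieltjes_poly_def degree_add_le degree_node_poly)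
  qed
  then show "degree (stieltjes_poly q n g lam) \<le> l"
    and "coeff (stieltjes_poly q n g lam) l = q + (if n = Suc l then sum g {1..n} else 0)"
    by simp_all
qed

lemma stieltjes_poly_sign_beyond:
  assumes g: "disc_ok l g lam" and l: "1 \<le> l" and q: "0 < q" and T: "lam l + sum g {1..l} / q \<le> T"
  shows "0 \<le> (-1) ^ l * poly (stieltjes_poly q l g lam) (- T)"
proof -
  define m0 where "m0 = sum g {1..l}"
  have m0: "0 < m0" unfolding m0_def using disc_ok_weight_pos[OF g] l by (intro sum_pos) auto
  then have mq: "0 < m0 / q" using q by simp
  have gap: "m0 / q \<le> T - lam i" if "i \<in> {1..l}" for i
    using strict_mono_on_leD[OF disc_ok_strict_mono[OF g], of i l] that T by (auto simp: m0_def)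
  have "- (g i * q / m0) \<le> g i / (- T + lam i)" if i: "i \<in> {1..l}" for i
  proof -
    from frac_le[OF less_imp_le[OF disc_ok_weight_pos[OF g i]] order_refl mq gap[OF i]]
    have "g i / (T - lam i) \<le> g i / (m0 / q)" .
    moreover have "g i / (- T + lam i) = - (g i / (T - lam i))"
      by (metis divide_minus_right minus_diff_eq uminus_add_conv_diff)
    ultimately show ?thesis by simp
  qed
  then have "(\<Sum>i=1..l. - (g i * q / m0)) \<le> (\<Sum>i=1..l. g i / (- T + lam i))"
    by (intro sum_mono) auto
  moreover have "(\<Sum>i=1..l. - (g i * q / m0)) = - q"
    using m0 by (simp add: sum_negf sum_divide_distrib[symmetric] sum_distrib_right[symmetric] m0_def)
  ultimately have "0 \<le> q + (\<Sum>i=1..l. g i / (- T + lam i))" by linarith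
  moreover have "0 < (-1) ^ l * (\<Prod>i=1..l. lam i - T)"
  proof (rule sign_prod_interlaced[OF disc_ok_strict_mono[OF g]])
    show "0 < l \<Longrightarrow> lam l < T" using gap[of l] mq l by force
  qed simp_all
  moreover have "- T + lam i \<noteq> 0" if "i \<in> {1..l}" for i
    using gap[OF that] mq by linarith
  ultimately show ?thesis
    using poly_stieltjes_poly[of l "- T" lam q g]
    by (simp add: poly_node_poly mult.assoc[symmetric])
qed

lemma stieltjes_poly_last_zero:
  assumes g: "disc_ok l g lam" and l: "1 \<le> l" and q: "0 < q"
  obtains z where "lam l < z" "z \<le> lam l + dmom l g lam 0 / q" "poly (stieltjes_poly q l g lam) (- z) = 0"
proof -
  define P where "P = stieltjes_poly q l g lam"
  define T where "T = lam l + dmom l g lam 0 / q"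
  have "0 < sum g {1..l}" using disc_ok_weight_pos[OF g] l by (intro sum_pos) auto
  then have lT: "lam l < T" using dmom_0[OF g] q by (simp add: T_def)
  have sgn_l: "0 < (-1) ^ (l - 1) * poly P (- lam l)"
    using stieltjes_poly_sign_at_atoms[OF g, of l q] l by (simp add: P_def)
  have "lam l + sum g {1..l} / q \<le> T" using dmom_0[OF g] by (simp add: T_def)
  from stieltjes_poly_sign_beyond[OF g l q this]
  have sgn_T: "0 \<le> (-1) ^ Suc (l - 1) * poly P (- T)" using l by (simp add: P_def)
  obtain z where "lam l < z" "z \<le> T" "poly P (- z) = 0"
    by (rule poly_root_between[OF lT _ alternating_signs_product_nonpos[OF sgn_l sgn_T]])
      (use sgn_l in auto)
  then show ?thesis using that by (simp add: P_def T_def)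
qed

lemma cbf_of_stieltjes_from_zeros:
  assumes g: "disc_ok n g lam" and l: "1 \<le> l" and n: "n = Suc l \<and> q = 0 \<or> n = l \<and> 0 < q"
    and k: "strict_mono_on {1..l} k"
    and brk: "\<And>j. j \<in> {1..l} \<Longrightarrow> lam j < k j \<and> (j < n \<longrightarrow> k j < lam (Suc j))"
    and zeros: "\<And>j. j \<in> {1..l} \<Longrightarrow> poly (stieltjes_poly q n g lam) (- k j) = 0"
  shows "\<exists>c. disc_ok l c k \<and>
    star_rel q 0 (if n = Suc l then 1 / dmom n g lam 0 else 0) (1 / (q + dmom n g lam (-1))) n g lam l c k"
proof -
  define s where "s = q + (if n = Suc l then sum g {1..n} else 0)"
  define Q where "Q = poly (node_poly {1..n} lam)"
  define K where "K = poly (node_poly {1..l} k)"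
  have "0 < sum g {1..n}" if "n = Suc l"
    using that disc_ok_weight_pos[OF g] by (intro sum_pos) auto
  then have s: "0 < s" using n by (auto simp: s_def)
  have lam_pos: "0 < lam i" if "i \<in> {1..n}" for i using disc_ok_atom_pos[OF g that] .
  have k_pos: "0 < k j" if "j \<in> {1..l}" for j using brk[OF that] lam_pos[of j] that n by auto
  have Q_pos: "0 < Q t" and K_pos: "0 < K t" if "0 \<le> t" for t
    using lam_pos k_pos that unfolding Q_def K_def
    by (auto intro!: poly_node_poly_pos simp: add_nonneg_pos)
  have "degree (stieltjes_poly q n g lam) \<le> l" "coeff (stieltjes_poly q n g lam) l = s"
    using stieltjes_poly_degree_coeff[OF l, of n q g lam] n unfolding s_def by auto
  then have P: "stieltjes_poly q n g lam = smult s (node_poly {1..l} k)"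
    by (rule poly_eq_smult_node_poly[OF _ _ k zeros])
  have stieltjes: "q + (\<Sum>i=1..n. g i / (t + lam i)) = s * K t / Q t" if "0 \<le> t" for t
  proof -
    have "poly (stieltjes_poly q n g lam) t = s * K t" by (simp add: P K_def)
    moreover have "t + lam i \<noteq> 0" if "i \<in> {1..n}" for i using lam_pos[OF that] \<open>0 \<le> t\<close> by linarith
    ultimately show ?thesis
      using poly_stieltjes_poly[of n t lam q g] Q_pos[OF that] by (simp add: Q_def field_simps)
  qed
  obtain e where e_pos: "\<And>j. j \<in> {0..l} \<Longrightarrow> 0 < e j" and e0: "e 0 = Q 0 / K 0"
    and expansion: "\<And>t. 0 < t \<Longrightarrow> Q t / K t =
      (if n = Suc l then t else 0) + e 0 + (\<Sum>j=1..l. e j * (t / (t + k j)))"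
    using interlaced_ratio_expansion_with_zero_atom[OF disc_ok_strict_mono[OF g] lam_pos k _ brk] l n
    unfolding Q_def K_def by auto
  define c where "c j = e j / s" for j
  have c_ok: "disc_ok l c k"
    using e_pos s k k_pos l by (intro disc_okI) (auto simp: c_def)
  have star: "star_rel q 0 (if n = Suc l then 1 / dmom n g lam 0 else 0) (1 / (q + dmom n g lam (-1))) n g lam l c k"
    unfolding star_rel_def
  proof (intro allI impI)
    fix t :: real assume t: "0 < t"
    have "1 / (q + dmom n g lam (-1)) = e 0 / s"
      using stieltjes[of 0] dmom_minus_1[OF g] e0 s K_pos[of 0] Q_pos[of 0] by simp
    moreover have "dmom n g lam 0 = s" if "n = Suc l" using that n dmom_0[OF g] by (simp add: s_def)
    moreover have "dint l c k (\<lambda>u. t / (t + u)) = (\<Sum>j=1..l. e j * (t / (t + k j))) / s"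
      unfolding dint_def c_def sum_divide_distrib by (intro sum.cong) auto
    ultimately have "(if n = Suc l then 1 / dmom n g lam 0 else 0) * t + 1 / (q + dmom n g lam (-1))
        + dint l c k (\<lambda>u. t / (t + u)) = Q t / K t / s"
      using expansion[OF t] by (simp add: add_divide_distrib)
    moreover have "q + 0 / t + dint n g lam (\<lambda>u. 1 / (t + u)) = s * K t / Q t"
      using stieltjes[of t] t unfolding dint_def by simp
    ultimately show "q + 0 / t + dint n g lam (\<lambda>u. 1 / (t + u)) = 1 / ((if n = Suc l then 1 / dmom n g lam 0 else 0) * t
        + 1 / (q + dmom n g lam (-1)) + dint l c k (\<lambda>u. t / (t + u)))"
      by simp
  qed
  show ?thesis by (intro exI[of _ c] conjI c_ok star)
qed

section \<open>From the complete Bernstein side to the Stieltjes side\<close>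

text \<open>The denominator in \<open>star_rel\<close>, a complete Bernstein function, times \<open>node_poly {1..l} k\<close>.\<close>

definition cbf_poly :: "real \<Rightarrow> real \<Rightarrow> nat \<Rightarrow> (nat \<Rightarrow> real) \<Rightarrow> (nat \<Rightarrow> real) \<Rightarrow> real poly" where
  "cbf_poly a b l c k =
    smult b (node_poly {1..l} k) + pCons 0 (smult a (node_poly {1..l} k) + partial_numer {1..l} c k)"

lemma poly_cbf_poly:
  assumes "\<And>j. j \<in> {1..l} \<Longrightarrow> t + k j \<noteq> 0"
  shows "poly (cbf_poly a b l c k) t =
    poly (node_poly {1..l} k) t * (a * t + b + dint l c k (\<lambda>u. t / (t + u)))"
proof -
  have "dint l c k (\<lambda>u. t / (t + u)) = t * (\<Sum>j=1..l. c j / (t + k j))"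
    unfolding dint_def sum_distrib_left by (intro sum.cong) auto
  then show ?thesis
    using poly_partial_numer[of "{1..l}" t k c] assms by (simp add: cbf_poly_def algebra_simps)
qed

lemma cbf_poly_sign_at_atoms:
  assumes c: "disc_ok l c k" and b: "0 < b" and j: "j \<in> {0..l}"
  shows "0 < (-1) ^ j * poly (cbf_poly a b l c k) (- with_zero_atom k j)"
proof (cases "j = 0")
  case True
  have "0 < poly (node_poly {1..l} k) 0"
    using disc_ok_atom_pos[OF c] by (intro poly_node_poly_pos) auto
  with True b show ?thesis by (simp add: cbf_poly_def with_zero_atom_def)
next
  case False
  with j have j1: "j \<in> {1..l}" by auto
  have "poly (cbf_poly a b l c k) (- k j) = - k j * (c j * (\<Prod>i\<in>{1..l}-{j}. k i - k j))"
    using j1 by (simp add: cbf_poly_def node_poly_root poly_partial_numer_node)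
  moreover have "(- 1 :: real) ^ j = - ((- 1) ^ (j - 1))"
    using False by (cases j) auto
  ultimately have "(-1) ^ j * poly (cbf_poly a b l c k) (- k j) =
      k j * c j * ((-1) ^ (j - 1) * (\<Prod>i\<in>{1..l}-{j}. k i - k j))"
    by simp
  moreover have "0 < k j * c j * ((-1) ^ (j - 1) * (\<Prod>i\<in>{1..l}-{j}. k i - k j))"
    using sign_prod_node_gaps[OF disc_ok_strict_mono[OF c] j1]
      disc_ok_atom_pos[OF c j1] disc_ok_weight_pos[OF c j1] by simp
  ultimately show ?thesis using False by (simp add: with_zero_atom_def)
qed

lemma cbf_poly_sign_beyond:
  assumes c: "disc_ok l c k" and l: "1 \<le> l" and a: "0 < a"
    and T: "2 * k l \<le> T" "b + 2 * sum c {1..l} < a * T"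
  shows "0 < (-1) ^ Suc l * poly (cbf_poly a b l c k) (- T)"
proof -
  have k_le: "0 < k j" "k j \<le> k l" if "j \<in> {1..l}" for j
    using disc_ok_atom_pos[OF c that] strict_mono_on_leD[OF disc_ok_strict_mono[OF c], of j l] that
    by auto
  have gap: "0 < T - k j" "T / (T - k j) \<le> 2" if "j \<in> {1..l}" for j
    using k_le[OF that] T(1) by (auto simp: divide_le_eq)
  have "dint l c k (\<lambda>u. - T / (- T + u)) = (\<Sum>j=1..l. c j * (T / (T - k j)))"
    unfolding dint_def by (simp add: divide_minus_right[symmetric] minus_divide_divide)
  also have "\<dots> \<le> (\<Sum>j=1..l. 2 * c j)"
  proof (rule sum_mono)
    fix j assume "j \<in> {1..l}"
    then show "c j * (T / (T - k j)) \<le> 2 * c j"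
      using gap[of j] disc_ok_weight_pos[OF c, of j] mult_left_mono[of "T / (T - k j)" 2 "c j"]
      by (simp add: mult.commute)
  qed
  finally have "a * - T + b + dint l c k (\<lambda>u. - T / (- T + u)) < 0"
    using T(2) by (simp add: sum_distrib_left)
  moreover have "0 < (-1) ^ l * (\<Prod>j=1..l. k j - T)"
    using k_le T(1) l by (intro sign_prod_interlaced[OF disc_ok_strict_mono[OF c]]) force+
  moreover have "- T + k j \<noteq> 0" if "j \<in> {1..l}" for j using gap(1)[OF that] by linarith
  ultimately show ?thesis
    using poly_cbf_poly[of l "- T" k a b c] by (simp add: poly_node_poly mult.assoc[symmetric] mult_pos_neg)
qed

lemma cbf_poly_interlaced_zeros:
  assumes c: "disc_ok l c k" and l: "1 \<le> l" and b: "0 < b" and n: "n = Suc l \<and> 0 < a \<or> n = l"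
  obtains lam where "\<And>i. i \<in> {1..n} \<Longrightarrow> with_zero_atom k (i - 1) < lam i \<and> (i \<le> l \<longrightarrow> lam i < k i)
      \<and> poly (cbf_poly a b l c k) (- lam i) = 0"
proof -
  define G where "G = cbf_poly a b l c k"
  define T where "T = 2 * k l + (b + 2 * sum c {1..l}) / a + 1"
  \<comment> \<open>The node \<open>T\<close> is only used when \<open>n = Suc l\<close>, i.e. when \<open>a > 0\<close>.\<close>
  define x where "x = (with_zero_atom k)(Suc l := T)"
  have k_pos: "0 < k j" if "j \<in> {1..l}" for j using disc_ok_atom_pos[OF c that] .
  have T: "2 * k l \<le> T" "b + 2 * sum c {1..l} < a * T" if a: "0 < a"
  proof -
    have "0 \<le> sum c {1..l}" using disc_ok_weight_pos[OF c] by (intro sum_nonneg) (simp add: less_imp_le)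
    then show "2 * k l \<le> T" using a b by (simp add: T_def)
    have "a * T = 2 * a * k l + (b + 2 * sum c {1..l}) + a" using a by (simp add: T_def field_simps)
    moreover have "0 < a * k l" using a k_pos[of l] l by simp
    ultimately show "b + 2 * sum c {1..l} < a * T" using a by linarith
  qed
  have x_mono: "strict_mono_on {0..n} x"
  proof (rule strict_mono_on_atLeastAtMostI)
    fix i assume "0 \<le> i" "i < n"
    show "x i < x (Suc i)"
    proof (cases "i = l")
      case True
      with \<open>i < n\<close> n have "0 < a" by auto
      then show ?thesis using T(1) k_pos[of l] l True by (simp add: x_def with_zero_atom_def)
    next
      case False
      with \<open>i < n\<close> n have "i < l" by auto
      then have "with_zero_atom k i < with_zero_atom k (Suc i)"
        using disc_ok_atom_pos[OF c, of 1] l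
        by (intro strict_mono_onD[OF strict_mono_with_zero_atom[OF disc_ok_strict_mono[OF c]]]) auto
      with \<open>i < l\<close> show ?thesis by (simp add: x_def)
    qed
  qed
  have sgn: "0 < (-1) ^ (j - 0) * poly G (- x j)" if "j \<in> {0..n}" for j
  proof (cases "j = Suc l")
    case True
    with that n have a: "0 < a" by auto
    then show ?thesis using cbf_poly_sign_beyond[OF c l a T[OF a]] True by (simp add: G_def x_def)
  next
    case False
    with that n have "j \<in> {0..l}" by auto
    then show ?thesis using cbf_poly_sign_at_atoms[OF c b, of j a] False by (simp add: G_def x_def)
  qed
  obtain z where z: "\<And>j. j \<in> {0..<n} \<Longrightarrow> x j < z j \<and> z j < x (Suc j) \<and> poly G (- z j) = 0"
    using alternating_poly_roots[OF x_mono sgn] by blast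
  show thesis
  proof (rule that)
    fix i assume i: "i \<in> {1..n}"
    then have "x (i - 1) < z (i - 1)" "z (i - 1) < x i" "poly G (- z (i - 1)) = 0"
      using z[of "i - 1"] by auto
    moreover have "x (i - 1) = with_zero_atom k (i - 1)" "i \<le> l \<longrightarrow> x i = k i"
      using i n by (auto simp: x_def with_zero_atom_def)
    ultimately show "with_zero_atom k (i - 1) < z (i - 1) \<and> (i \<le> l \<longrightarrow> z (i - 1) < k i)
        \<and> poly (cbf_poly a b l c k) (- z (i - 1)) = 0"
      by (auto simp: G_def)
  qed
qed

lemma cbf_poly_degree_coeff:
  assumes l: "1 \<le> l" and n: "n = Suc l \<or> n = l \<and> a = 0"
  shows "degree (cbf_poly a b l c k) \<le> n"
    and "coeff (cbf_poly a b l c k) n = a + (if n = l then b + sum c {1..l} else 0)"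
proof -
  define K where "K = node_poly {1..l} k"
  define N where "N = partial_numer {1..l} c k"
  have K: "degree K = l" "coeff K l = 1"
    using degree_node_poly[of "{1..l}" k] coeff_node_poly_card[of "{1..l}" k] by (simp_all add: K_def)
  have N: "degree N \<le> l - 1" "coeff N (l - 1) = sum c {1..l}"
    using degree_partial_numer[of "{1..l}" c k] coeff_partial_numer[of "{1..l}" c k]
    by (simp_all add: N_def)
  have N_top: "coeff N l = 0" using N(1) l by (intro coeff_eq_0) linarith
  have shift: "coeff (pCons 0 N) l = coeff N (l - 1)" using l by (cases l) auto
  have G: "cbf_poly a b l c k = smult b K + pCons 0 (smult a K + N)"
    by (simp add: cbf_poly_def K_def N_def)
  have "degree (cbf_poly a b l c k) \<le> n \<and>
      coeff (cbf_poly a b l c k) n = a + (if n = l then b + sum c {1..l} else 0)"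
    using n
  proof
    assume "n = Suc l"
    have "degree (pCons 0 (smult a K + N)) \<le> Suc l"
      using degree_pCons_le[of 0 "smult a K + N"] K N(1) degree_add_le[of "smult a K" l N]
      by (simp add: le_trans)
    then show ?thesis
      using \<open>n = Suc l\<close> K N_top by (simp add: G coeff_eq_0 degree_add_le)
  next
    assume na: "n = l \<and> a = 0"
    moreover have "degree (pCons 0 N) \<le> l"
      using degree_pCons_le[of 0 N] N(1) l by simp
    ultimately show ?thesis
      using na G K N shift by (simp add: degree_add_le)
  qed
  then show "degree (cbf_poly a b l c k) \<le> n"
    and "coeff (cbf_poly a b l c k) n = a + (if n = l then b + sum c {1..l} else 0)"
    by simp_all
qed

lemma interlaced_atoms_strict_mono_pos:
  assumes c: "disc_ok l c k" and n: "n = Suc l \<or> n = l"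
    and brk: "\<And>i. i \<in> {1..n} \<Longrightarrow> with_zero_atom k (i - 1) < lam i \<and> (i \<le> l \<longrightarrow> lam i < k i)"
  shows "strict_mono_on {1..n} lam" and "\<And>i. i \<in> {1..n} \<Longrightarrow> 0 < lam i"
proof -
  show "strict_mono_on {1..n} lam"
  proof (rule strict_mono_on_atLeastAtMostI)
    fix i assume "1 \<le> i" "i < n"
    then show "lam i < lam (Suc i)"
      using brk[of i] brk[of "Suc i"] n by (auto simp: with_zero_atom_def)
  qed
  show "0 < lam i" if i: "i \<in> {1..n}" for i
  proof (cases "i = 1")
    case False
    then have "i - 1 \<in> {1..l}" using i n by auto
    moreover have "with_zero_atom k (i - 1) = k (i - 1)" using False i by (simp add: with_zero_atom_def)
    ultimately show ?thesis using brk[OF i] disc_ok_atom_pos[OF c, of "i - 1"] by fastforce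
  qed (use brk[OF i] in \<open>simp add: with_zero_atom_def\<close>)
qed

lemma stieltjes_of_cbf_from_zeros:
  assumes c: "disc_ok l c k" and l: "1 \<le> l" and b: "0 < b" and n: "n = Suc l \<and> 0 < a \<or> n = l \<and> a = 0"
    and brk: "\<And>i. i \<in> {1..n} \<Longrightarrow> with_zero_atom k (i - 1) < lam i \<and> (i \<le> l \<longrightarrow> lam i < k i)"
    and zeros: "\<And>i. i \<in> {1..n} \<Longrightarrow> poly (cbf_poly a b l c k) (- lam i) = 0"
  shows "\<exists>g. disc_ok n g lam \<and> star_rel (if n = l then 1 / (b + dmom l c k 0) else 0) 0 a b n g lam l c k"
proof -
  define s where "s = a + (if n = l then b + sum c {1..l} else 0)"
  define K where "K = poly (node_poly {1..l} k)"
  define L where "L = poly (node_poly {1..n} lam)"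
  have "0 \<le> sum c {1..l}" using disc_ok_weight_pos[OF c] by (intro sum_nonneg) (simp add: less_imp_le)
  then have s: "0 < s" using n b by (auto simp: s_def)
  have lam: "strict_mono_on {1..n} lam" and lam_pos: "\<And>i. i \<in> {1..n} \<Longrightarrow> 0 < lam i"
    using interlaced_atoms_strict_mono_pos[OF c _ brk] n by auto
  have "degree (cbf_poly a b l c k) \<le> n" "coeff (cbf_poly a b l c k) n = s"
    using cbf_poly_degree_coeff[OF l, of n a b c k] n by (auto simp: s_def)
  then have G: "cbf_poly a b l c k = smult s (node_poly {1..n} lam)"
    by (rule poly_eq_smult_node_poly[OF _ _ lam zeros])
  define e where "e i = (\<Prod>j=1..l. k j - lam i) / (\<Prod>j\<in>{1..n}-{i}. lam j - lam i)" for i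
  have brk1: "(1 < i \<longrightarrow> k (i - 1) < lam i) \<and> (i - 1 < l \<longrightarrow> lam i < k (Suc (i - 1)))"
    if "i \<in> {1..n}" for i
    using brk[OF that] that n by (auto simp: with_zero_atom_def)
  have n1: "1 \<le> n" "n - 1 \<le> l" "l \<le> Suc n - 1" using n l by auto
  have e_pos: "0 < e i" if "i \<in> {1..n}" for i
    unfolding e_def using interlacing_weights_pos[OF lam n1(1) disc_ok_strict_mono[OF c] n1(2,3) brk1] that
    by blast
  have expansion: "K t / L t = (if n = l then 1 else 0) + (\<Sum>i=1..n. e i / (t + lam i))" if "0 < t" for t
    unfolding e_def K_def L_def
    using interlacing_ratio_expansion[OF lam n1(1) disc_ok_strict_mono[OF c] n1(2,3) brk1, of t]
      lam_pos that n by (force simp: add_pos_pos)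
  define g where "g i = e i / s" for i
  have g_ok: "disc_ok n g lam"
    using e_pos s lam lam_pos n1(1) by (intro disc_okI) (auto simp: g_def)
  have star: "star_rel (if n = l then 1 / (b + dmom l c k 0) else 0) 0 a b n g lam l c k"
    unfolding star_rel_def
  proof (intro allI impI)
    fix t :: real assume t: "0 < t"
    have tk: "0 < t + k j" if "j \<in> {1..l}" for j using disc_ok_atom_pos[OF c that] t by linarith
    then have "0 < K t" unfolding K_def by (rule poly_node_poly_pos)
    moreover have "s * L t = K t * (a * t + b + dint l c k (\<lambda>u. t / (t + u)))"
      using poly_cbf_poly[of l t k a b c] tk G unfolding K_def L_def by force
    ultimately have "1 / (a * t + b + dint l c k (\<lambda>u. t / (t + u))) = K t / (s * L t)"
      by simp
    also have "\<dots> = K t / L t / s" by (simp add: mult.commute)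
    also have "\<dots> = ((if n = l then 1 else 0) + (\<Sum>i=1..n. e i / (t + lam i))) / s"
      using expansion[OF t] by simp
    also have "\<dots> = (if n = l then 1 / (b + dmom l c k 0) else 0) + 0 / t + dint n g lam (\<lambda>u. 1 / (t + u))"
    proof -
      have "(if n = l then 1 / (b + dmom l c k 0) else 0) = (if n = l then 1 else 0) / s"
        using n dmom_0[OF c] by (auto simp: s_def)
      moreover have "dint n g lam (\<lambda>u. 1 / (t + u)) = (\<Sum>i=1..n. e i / (t + lam i)) / s"
        unfolding dint_def g_def sum_divide_distrib by (intro sum.cong) auto
      ultimately show ?thesis by (simp add: add_divide_distrib)
    qed
    finally show "(if n = l then 1 / (b + dmom l c k 0) else 0) + 0 / t + dint n g lam (\<lambda>u. 1 / (t + u))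
        = 1 / (a * t + b + dint l c k (\<lambda>u. t / (t + u)))" ..
  qed
  show ?thesis using g_ok star by blast
qed

lemma cbf_of_stieltjes_Suc_atoms:
  assumes l: "1 \<le> l" and g: "disc_ok (l+1) g lam"
  shows "\<exists>c k. disc_ok l c k
    \<and> star_rel 0 0 (1 / dmom (l+1) g lam 0) (1 / dmom (l+1) g lam (-1)) (l+1) g lam l c k
    \<and> (\<forall>c' k'. disc_ok l c' k'
        \<and> star_rel 0 0 (1 / dmom (l+1) g lam 0) (1 / dmom (l+1) g lam (-1)) (l+1) g lam l c' k'
        \<longrightarrow> (\<forall>i\<in>{1..l}. c' i = c i \<and> k' i = k i))
    \<and> (\<forall>i\<in>{1..l}. lam i < k i \<and> k i < lam (Suc i))"
proof -
  define P where "P = stieltjes_poly 0 (l+1) g lam"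
  obtain k where k: "\<And>j. j \<in> {1..<l+1} \<Longrightarrow> lam j < k j \<and> k j < lam (Suc j) \<and> poly P (- k j) = 0"
    using alternating_poly_roots[OF disc_ok_strict_mono[OF g] stieltjes_poly_sign_at_atoms[OF g, of _ 0]]
    unfolding P_def by blast
  have k_mono: "strict_mono_on {1..l} k"
  proof (rule strict_mono_on_atLeastAtMostI)
    fix i assume "1 \<le> i" "i < l"
    then show "k i < k (Suc i)" using k[of i] k[of "Suc i"] by auto
  qed
  have "\<exists>c. disc_ok l c k \<and> star_rel 0 0 (if l+1 = Suc l then 1 / dmom (l+1) g lam 0 else 0)
      (1 / (0 + dmom (l+1) g lam (-1))) (l+1) g lam l c k"
    by (rule cbf_of_stieltjes_from_zeros[OF g l _ k_mono]) (use k in \<open>auto simp: P_def\<close>)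
  then obtain c where c: "disc_ok l c k"
    and star: "star_rel 0 0 (1 / dmom (l+1) g lam 0) (1 / dmom (l+1) g lam (-1)) (l+1) g lam l c k"
    by auto
  have "\<forall>c' k'. disc_ok l c' k'
        \<and> star_rel 0 0 (1 / dmom (l+1) g lam 0) (1 / dmom (l+1) g lam (-1)) (l+1) g lam l c' k'
        \<longrightarrow> (\<forall>i\<in>{1..l}. c' i = c i \<and> k' i = k i)"
    using star_rel_unique_cbf[OF c _ star] by blast
  moreover have "\<forall>i\<in>{1..l}. lam i < k i \<and> k i < lam (Suc i)" using k by auto
  ultimately show ?thesis using c star by blast
qed

lemma cbf_of_stieltjes_with_constant:
  assumes l: "1 \<le> l" and q: "0 < q" and g: "disc_ok l g lam"
  shows "\<exists>c k. disc_ok l c k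
    \<and> star_rel q 0 0 (1 / (q + dmom l g lam (-1))) l g lam l c k
    \<and> (\<forall>c' k'. disc_ok l c' k'
        \<and> star_rel q 0 0 (1 / (q + dmom l g lam (-1))) l g lam l c' k'
        \<longrightarrow> (\<forall>i\<in>{1..l}. c' i = c i \<and> k' i = k i))
    \<and> (\<forall>i\<in>{1..l}. lam i < k i)
    \<and> (\<forall>i. 1 \<le> i \<and> i < l \<longrightarrow> k i < lam (Suc i))
    \<and> k l \<le> lam l + dmom l g lam 0 / q"
proof -
  define P where "P = stieltjes_poly q l g lam"
  obtain z where z: "\<And>j. j \<in> {1..<l} \<Longrightarrow> lam j < z j \<and> z j < lam (Suc j) \<and> poly P (- z j) = 0"
    using alternating_poly_roots[OF disc_ok_strict_mono[OF g] stieltjes_poly_sign_at_atoms[OF g, of _ q]]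
    unfolding P_def by blast
  obtain z_l where z_l: "lam l < z_l" "z_l \<le> lam l + dmom l g lam 0 / q" "poly P (- z_l) = 0"
    using stieltjes_poly_last_zero[OF g l q] unfolding P_def by blast
  define k where "k = z(l := z_l)"
  have k: "lam j < k j \<and> (j < l \<longrightarrow> k j < lam (Suc j)) \<and> poly P (- k j) = 0" if "j \<in> {1..l}" for j
    using z[of j] z_l that by (auto simp: k_def)
  have k_mono: "strict_mono_on {1..l} k"
  proof (rule strict_mono_on_atLeastAtMostI)
    fix i assume "1 \<le> i" "i < l"
    then show "k i < k (Suc i)" using k[of i] k[of "Suc i"] by auto
  qed
  have "\<exists>c. disc_ok l c k \<and> star_rel q 0 (if l = Suc l then 1 / dmom l g lam 0 else 0)
      (1 / (q + dmom l g lam (-1))) l g lam l c k"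
    by (rule cbf_of_stieltjes_from_zeros[OF g l _ k_mono]) (use q k in \<open>auto simp: P_def\<close>)
  then obtain c where c: "disc_ok l c k" and star: "star_rel q 0 0 (1 / (q + dmom l g lam (-1))) l g lam l c k"
    by auto
  have "\<forall>c' k'. disc_ok l c' k' \<and> star_rel q 0 0 (1 / (q + dmom l g lam (-1))) l g lam l c' k'
      \<longrightarrow> (\<forall>i\<in>{1..l}. c' i = c i \<and> k' i = k i)"
    using star_rel_unique_cbf[OF c _ star] by blast
  moreover have "\<forall>i\<in>{1..l}. lam i < k i" "\<forall>i. 1 \<le> i \<and> i < l \<longrightarrow> k i < lam (Suc i)"
    using k by auto
  moreover have "k l \<le> lam l + dmom l g lam 0 / q" using z_l by (simp add: k_def)
  ultimately show ?thesis using c star by blast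
qed

lemma stieltjes_of_cbf_with_drift:
  assumes l: "1 \<le> l" and a: "0 < a" and b: "0 < b" and c: "disc_ok l c k"
  shows "\<exists>g lam. disc_ok (l+1) g lam \<and> star_rel 0 0 a b (l+1) g lam l c k
    \<and> (\<forall>g' lam'. disc_ok (l+1) g' lam' \<and> star_rel 0 0 a b (l+1) g' lam' l c k
        \<longrightarrow> (\<forall>i\<in>{1..l+1}. g' i = g i \<and> lam' i = lam i))"
proof -
  have n: "l + 1 = Suc l \<and> 0 < a \<or> l + 1 = l" using a by simp
  obtain lam where lam: "\<And>i. i \<in> {1..l+1} \<Longrightarrow> with_zero_atom k (i - 1) < lam i
      \<and> (i \<le> l \<longrightarrow> lam i < k i) \<and> poly (cbf_poly a b l c k) (- lam i) = 0"
    using cbf_poly_interlaced_zeros[OF c l b n] by blast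
  have "\<exists>g. disc_ok (l+1) g lam \<and> star_rel (if l+1 = l then 1 / (b + dmom l c k 0) else 0) 0 a b (l+1) g lam l c k"
    by (rule stieltjes_of_cbf_from_zeros[OF c l b]) (use a lam in auto)
  then obtain g where g: "disc_ok (l+1) g lam" and star: "star_rel 0 0 a b (l+1) g lam l c k"
    by auto
  have "\<forall>g' lam'. disc_ok (l+1) g' lam' \<and> star_rel 0 0 a b (l+1) g' lam' l c k
      \<longrightarrow> (\<forall>i\<in>{1..l+1}. g' i = g i \<and> lam' i = lam i)"
    using star_rel_unique_stieltjes[OF g _ star] by blast
  then show ?thesis using g star by blast
qed

lemma stieltjes_of_cbf_without_drift:
  assumes l: "1 \<le> l" and b: "0 < b" and c: "disc_ok l c k"
  shows "\<exists>g lam. disc_ok l g lam \<and> star_rel (1 / (b + dmom l c k 0)) 0 0 b l g lam l c k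
    \<and> (\<forall>g' lam'. disc_ok l g' lam' \<and> star_rel (1 / (b + dmom l c k 0)) 0 0 b l g' lam' l c k
        \<longrightarrow> (\<forall>i\<in>{1..l}. g' i = g i \<and> lam' i = lam i))"
proof -
  obtain lam where lam: "\<And>i. i \<in> {1..l} \<Longrightarrow> with_zero_atom k (i - 1) < lam i
      \<and> (i \<le> l \<longrightarrow> lam i < k i) \<and> poly (cbf_poly 0 b l c k) (- lam i) = 0"
    using cbf_poly_interlaced_zeros[OF c l b, of l 0] by blast
  have "\<exists>g. disc_ok l g lam \<and> star_rel (if l = l then 1 / (b + dmom l c k 0) else 0) 0 0 b l g lam l c k"
    by (rule stieltjes_of_cbf_from_zeros[OF c l b]) (use lam in auto)
  then obtain g where g: "disc_ok l g lam" and star: "star_rel (1 / (b + dmom l c k 0)) 0 0 b l g lam l c k"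
    by auto
  have "\<forall>g' lam'. disc_ok l g' lam' \<and> star_rel (1 / (b + dmom l c k 0)) 0 0 b l g' lam' l c k
      \<longrightarrow> (\<forall>i\<in>{1..l}. g' i = g i \<and> lam' i = lam i)"
    using star_rel_unique_stieltjes[OF g _ star] by blast
  then show ?thesis using g star by blast
qed

theorem proposition5p1:
  fixes l :: nat
  assumes "l \<ge> 1"
  shows
  "(\<forall>g lam. disc_ok (l+1) g lam \<longrightarrow>
      (\<exists>c k. disc_ok l c k
         \<and> star_rel 0 0 (1 / dmom (l+1) g lam 0) (1 / dmom (l+1) g lam (-1)) (l+1) g lam l c k
         \<and> (\<forall>c' k'. disc_ok l c' k'
              \<and> star_rel 0 0 (1 / dmom (l+1) g lam 0) (1 / dmom (l+1) g lam (-1)) (l+1) g lam l c' k'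
              \<longrightarrow> (\<forall>i\<in>{1..l}. c' i = c i \<and> k' i = k i))
         \<and> (\<forall>i\<in>{1..l}. lam i < k i \<and> k i < lam (Suc i))))
 \<and> (\<forall>a b c k. a > 0 \<and> b > 0 \<and> disc_ok l c k \<longrightarrow>
      (\<exists>g lam. disc_ok (l+1) g lam \<and> star_rel 0 0 a b (l+1) g lam l c k
         \<and> (\<forall>g' lam'. disc_ok (l+1) g' lam' \<and> star_rel 0 0 a b (l+1) g' lam' l c k
              \<longrightarrow> (\<forall>i\<in>{1..l+1}. g' i = g i \<and> lam' i = lam i))))
 \<and> (\<forall>q g lam. q > 0 \<and> disc_ok l g lam \<longrightarrow>
      (\<exists>c k. disc_ok l c k
         \<and> star_rel q 0 0 (1 / (q + dmom l g lam (-1))) l g lam l c k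
         \<and> (\<forall>c' k'. disc_ok l c' k'
              \<and> star_rel q 0 0 (1 / (q + dmom l g lam (-1))) l g lam l c' k'
              \<longrightarrow> (\<forall>i\<in>{1..l}. c' i = c i \<and> k' i = k i))
         \<and> (\<forall>i\<in>{1..l}. lam i < k i)
         \<and> (\<forall>i. 1 \<le> i \<and> i < l \<longrightarrow> k i < lam (Suc i))
         \<and> k l \<le> lam l + dmom l g lam 0 / q))
 \<and> (\<forall>b c k. b > 0 \<and> disc_ok l c k \<longrightarrow>
      (\<exists>g lam. disc_ok l g lam \<and> star_rel (1 / (b + dmom l c k 0)) 0 0 b l g lam l c k
         \<and> (\<forall>g' lam'. disc_ok l g' lam' \<and> star_rel (1 / (b + dmom l c k 0)) 0 0 b l g' lam' l c k
              \<longrightarrow> (\<forall>i\<in>{1..l}. g' i = g i \<and> lam' i = lam i))))"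
  by (intro conjI allI impI; (elim conjE)?;
      rule cbf_of_stieltjes_Suc_atoms[OF assms] stieltjes_of_cbf_with_drift[OF assms]
        cbf_of_stieltjes_with_constant[OF assms] stieltjes_of_cbf_without_drift[OF assms];
      assumption)

end
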